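(* The graphs $G_k$, $k\ge 1$, have unbounded clique-width: for every integer $r$ there exists $k$ such that the clique-width of $G_k$ exceeds $r$. Consequently, the class of strict outerconfluent graphs has unbounded clique-width.
   Context: Clique-width of a graph is the minimum number of colors needed to construct it (up to forgetting colors) by the operations: create a single vertex with any color; take the disjoint union of two colored graphs; recolor all vertices of one color to another color; add all edges between vertices of color $a$ and vertices of color $b$ for two specified colors $a\ne b$. A strict outerconfluent drawing of a graph $G$ consists of finitely many smooth curves (tracks) in a topological disk, disjoint except at shared endpoints, which are vertices of $G$ (lying on the disk boundary) or junctions (where at least three tracks meet with the same tangent). An edge curve is a smooth curve in the union of tracks from a vertex to a vertex passing otherwise only through tracks and junctions. Each pair of adjacent vertices must be joined by exactly one edge curve, no edge curve joins a vertex to itself or two non-adjacent vertices, and every track lies on some edge curve. A strict outerconfluent graph is one with such a drawing. $G_k$ is defined by the following drawing in the closed upper half-plane. Vertices $v_1,\dots,v_{3^k}$ lie left to right on the boundary line, consecutive ones joined by a track along the line; odd-position vertices are blue, even-position ones yellow, and yellow vertices have no other tracks. Remaining tracks lie in levels $0,\dots,k-1$ (horizontal slabs, bottom to top). The bottom line of level $i$ carries points $p_{i,j}$, $0\le j<3^{k-i}/2$, left to right (the blue vertices for $i=0$, junctions for $i>0$), where tracks enter with vertical tangent. In level $i$, consecutive $p_{i,j},p_{i,j+1}$ are joined by a semicircle, subdivided by two junctions into three arcs when $j$ is a multiple of three (except that the single top-level semicircle joining $p_{k-1,0},p_{k-1,1}$ is not subdivided), a single track otherwise. For $i<k-1$ and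 each subdivided semicircle joining $p_{i,j},p_{i,j+1}$, tracks connect its two subdivision junctions to $p_{i+1,j/3}$, oriented so that each one connects $p_{i+1,j/3}$ downward by a smooth curve through the semicircle to $p_{i,j}$ and $p_{i,j+1}$. Two vertices are adjacent in $G_k$ iff some edge curve connects them. (This drawing is a strict outerconfluent drawing, so each $G_k$ is strict outerconfluent.) *)

theory Defs
  imports Main
begin

text \<open>A labelled graph on a vertex set V (subset of the ambient type 'a), with
an edge set E (set of ordered pairs, kept symmetric) and a colouring lab.
cw_constructible k V E lab holds iff (V,E,lab) is the value of an expression
using the four clique-width operations with colours from 0..k-1.
Disjoint union is realised by requiring the two vertex sets to be disjoint
subsets of the ambient type.\<close>

inductive cw_constructible :: "nat \<Rightarrow> 'a set \<Rightarrow> ('a \<times> 'a) set \<Rightarrow> ('a \<Rightarrow> nat) \<Rightarrow> bool"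
  for k :: nat where
  single: "lab v < k \<Longrightarrow> cw_constructible k {v} {} lab"
| union: "cw_constructible k V1 E1 l1 \<Longrightarrow> cw_constructible k V2 E2 l2 \<Longrightarrow> V1 \<inter> V2 = {}
          \<Longrightarrow> cw_constructible k (V1 \<union> V2) (E1 \<union> E2) (\<lambda>v. if v \<in> V1 then l1 v else l2 v)"
| recolor: "cw_constructible k V E l \<Longrightarrow> a < k \<Longrightarrow> b < k
          \<Longrightarrow> cw_constructible k V E (\<lambda>v. if l v = a then b else l v)"
| join: "cw_constructible k V E l \<Longrightarrow> a < k \<Longrightarrow> b < k \<Longrightarrow> a \<noteq> b
          \<Longrightarrow> cw_constructible k V
                (E \<union> {(u, w). u \<in> V \<and> w \<in> V \<and> ((l u = a \<and> l w = b) \<or> (l u = b \<and> l w = a))}) l"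

definition clique_width :: "'a set \<Rightarrow> ('a \<times> 'a) set \<Rightarrow> nat" where
  "clique_width V E = (LEAST k. \<exists>lab. cw_constructible k V E lab)"

text \<open>Vertices v_1..v_{3^k} are represented by 0..3^k-1 (v_{x+1} is x).
Blue vertices are the even x; blue vertex x is the level-0 point p_{0, x div 2}.
The level-0 points below the level-i point p_{i,b} reachable by a descending
smooth curve are b*3^i + s where s < 3^i has all i ternary digits in {0,1}.\<close>

definition below :: "nat \<Rightarrow> nat \<Rightarrow> nat set" where
  "below i b = {b * 3 ^ i + s | s. s < 3 ^ i \<and> (\<forall>t<i. (s div 3 ^ t) mod 3 \<le> 1)}"

definition G_V :: "nat \<Rightarrow> nat set" where
  "G_V k = {0..<3 ^ k}"

definition G_E :: "nat \<Rightarrow> (nat \<times> nat) set" where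
  "G_E k = {(x, y). x < 3 ^ k \<and> y < 3 ^ k \<and>
     (x + 1 = y \<or> y + 1 = x \<or>
      (even x \<and> even y \<and>
        (\<exists>i<k. \<exists>b. (x div 2 \<in> below i b \<and> y div 2 \<in> below i (Suc b)) \<or>
                   (y div 2 \<in> below i b \<and> x div 2 \<in> below i (Suc b)))))}"

end

theory Submission
  imports Defs
begin

definition k_module :: "nat \<Rightarrow> 'a set \<Rightarrow> ('a \<times> 'a) set \<Rightarrow> 'a set \<Rightarrow> bool" where
  "k_module c V E X \<longleftrightarrow> (\<exists>f. (\<forall>x\<in>X. f x < c) \<and>
     (\<forall>u\<in>X. \<forall>v\<in>X. f u = f v \<longrightarrow> (\<forall>w\<in>V - X. (u, w) \<in> E \<longleftrightarrow> (v, w) \<in> E)))"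

definition labelled_k_module ::
    "nat \<Rightarrow> 'a set \<Rightarrow> ('a \<times> 'a) set \<Rightarrow> ('a \<Rightarrow> nat) \<Rightarrow> 'a set \<Rightarrow> bool" where
  "labelled_k_module c V E l X \<longleftrightarrow> (\<exists>f. (\<forall>x\<in>X. f x < c) \<and>
     (\<forall>u\<in>X. \<forall>v\<in>X. f u = f v \<longrightarrow> l u = l v \<and> (\<forall>w\<in>V - X. (u, w) \<in> E \<longleftrightarrow> (v, w) \<in> E)))"

lemma labelled_k_module_imp_k_module: "labelled_k_module c V E l X \<Longrightarrow> k_module c V E X"
  unfolding labelled_k_module_def k_module_def by blast

lemma labelled_k_module_whole: "\<forall>v\<in>V. l v < c \<Longrightarrow> labelled_k_module c V E l V"
  unfolding labelled_k_module_def by (intro exI[of _ l]) auto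

lemma labelled_k_module_relabel:
  assumes "labelled_k_module c V E l X"
  shows "labelled_k_module c V E (g \<circ> l) X"
proof -
  obtain f where "\<forall>x\<in>X. f x < c"
    "\<forall>u\<in>X. \<forall>v\<in>X. f u = f v \<longrightarrow> l u = l v \<and> (\<forall>w\<in>V - X. (u, w) \<in> E \<longleftrightarrow> (v, w) \<in> E)"
    using assms unfolding labelled_k_module_def by blast
  then show ?thesis unfolding labelled_k_module_def comp_def by (intro exI[of _ f]) metis
qed

lemma labelled_k_module_join:
  assumes "labelled_k_module c V E l X" "X \<subseteq> V"
  shows "labelled_k_module c V (E \<union> {(u, w). u \<in> V \<and> w \<in> V \<and> R (l u) (l w)}) l X"
proof -
  obtain f where f: "\<forall>x\<in>X. f x < c"
    "\<forall>u\<in>X. \<forall>v\<in>X. f u = f v \<longrightarrow> l u = l v \<and> (\<forall>w\<in>V - X. (u, w) \<in> E \<longleftrightarrow> (v, w) \<in> E)"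
    using assms(1) unfolding labelled_k_module_def by blast
  show ?thesis unfolding labelled_k_module_def
  proof (intro exI[of _ f] conjI ballI impI)
    fix u v w assume uv: "u \<in> X" "v \<in> X" "f u = f v" and w: "w \<in> V - X"
    then have "l u = l v" "(u, w) \<in> E \<longleftrightarrow> (v, w) \<in> E" using f(2) by blast+
    with uv w assms(2) show "(u, w) \<in> E \<union> {(u, w). u \<in> V \<and> w \<in> V \<and> R (l u) (l w)} \<longleftrightarrow>
        (v, w) \<in> E \<union> {(u, w). u \<in> V \<and> w \<in> V \<and> R (l u) (l w)}" by auto
  qed (use f in blast)+
qed

lemma labelled_k_module_union:
  assumes "labelled_k_module c V1 E1 l1 X" "X \<subseteq> V1" "V1 \<inter> V2 = {}"
    and "E1 \<subseteq> V1 \<times> V1" "E2 \<subseteq> V2 \<times> V2" "\<forall>x\<in>X. l x = l1 x"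
  shows "labelled_k_module c (V1 \<union> V2) (E1 \<union> E2) l X"
proof -
  obtain f where f: "\<forall>x\<in>X. f x < c"
    "\<forall>u\<in>X. \<forall>v\<in>X. f u = f v \<longrightarrow> l1 u = l1 v \<and> (\<forall>w\<in>V1 - X. (u, w) \<in> E1 \<longleftrightarrow> (v, w) \<in> E1)"
    using assms(1) unfolding labelled_k_module_def by blast
  have edge: "(u, w) \<in> E1 \<union> E2 \<longleftrightarrow> w \<in> V1 \<and> (u, w) \<in> E1" if "u \<in> X" for u w
    using that assms(2-5) by blast
  show ?thesis unfolding labelled_k_module_def
  proof (intro exI[of _ f] conjI ballI impI)
    fix u v assume uv: "u \<in> X" "v \<in> X" "f u = f v"
    then show "l u = l v" using f(2) assms(6) by metis
    fix w assume "w \<in> (V1 \<union> V2) - X"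
    then show "(u, w) \<in> E1 \<union> E2 \<longleftrightarrow> (v, w) \<in> E1 \<union> E2"
      using uv f(2) edge[of u w] edge[of v w] by blast
  qed (use f in blast)
qed

lemma cw_constructible_wf:
  assumes "cw_constructible c V E l"
  shows "finite V \<and> V \<noteq> {} \<and> E \<subseteq> V \<times> V \<and> (\<forall>v\<in>V. l v < c)"
  using assms by (induction rule: cw_constructible.induct) auto

lemma cw_constructible_balanced_labelled_module:
  assumes "cw_constructible c V E l" "1 \<le> m" "m \<le> card V"
  shows "\<exists>X\<subseteq>V. m \<le> card X \<and> card X < 2 * m \<and> labelled_k_module c V E l X"
  using assms
proof (induction arbitrary: m rule: cw_constructible.induct)
  case (single l v)
  then show ?case using labelled_k_module_whole[of "{v}" l] by auto
next
  case (union V1 E1 l1 V2 E2 l2)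
  let ?l = "\<lambda>v. if v \<in> V1 then l1 v else l2 v"
  have wf: "finite V1" "finite V2" "E1 \<subseteq> V1 \<times> V1" "E2 \<subseteq> V2 \<times> V2"
    "\<forall>v\<in>V1 \<union> V2. ?l v < c"
    using cw_constructible_wf[OF union.hyps(1)] cw_constructible_wf[OF union.hyps(2)] by auto
  have card_union: "card (V1 \<union> V2) = card V1 + card V2"
    using wf(1,2) union.hyps(3) by (simp add: card_Un_disjoint)
  consider "card (V1 \<union> V2) < 2 * m" | "m \<le> card V1" | "m \<le> card V2"
    using card_union by linarith
  then show ?case
  proof cases
    case 1
    then show ?thesis using union.prems labelled_k_module_whole[OF wf(5)] by blast
  next
    case 2
    then obtain X where X: "X \<subseteq> V1" "m \<le> card X" "card X < 2 * m" "labelled_k_module c V1 E1 l1 X"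
      using union.IH(1) union.prems(1) by blast
    then have "labelled_k_module c (V1 \<union> V2) (E1 \<union> E2) ?l X"
      using union.hyps(3) wf(3,4) by (intro labelled_k_module_union) auto
    then show ?thesis using X by auto
  next
    case 3
    then obtain X where X: "X \<subseteq> V2" "m \<le> card X" "card X < 2 * m" "labelled_k_module c V2 E2 l2 X"
      using union.IH(2) union.prems(1) by blast
    then have "labelled_k_module c (V2 \<union> V1) (E2 \<union> E1) ?l X"
      using union.hyps(3) wf(3,4) by (intro labelled_k_module_union) auto
    then show ?thesis using X by (auto simp: Un_commute)
  qed
next
  case (recolor V E l a b)
  then obtain X where X: "X \<subseteq> V" "m \<le> card X" "card X < 2 * m" "labelled_k_module c V E l X"
    by blast
  have "labelled_k_module c V E ((\<lambda>x. if x = a then b else x) \<circ> l) X"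
    using X(4) by (rule labelled_k_module_relabel)
  then show ?case using X(1-3) by (intro exI[of _ X]) (simp add: comp_def)
next
  case (join V E l a b)
  then obtain X where X: "X \<subseteq> V" "m \<le> card X" "card X < 2 * m" "labelled_k_module c V E l X"
    by blast
  have "labelled_k_module c V
      (E \<union> {(u, w). u \<in> V \<and> w \<in> V \<and> (l u = a \<and> l w = b \<or> l u = b \<and> l w = a)}) l X"
    using labelled_k_module_join[OF X(4,1), where R = "\<lambda>x y. x = a \<and> y = b \<or> x = b \<and> y = a"] .
  then show ?case using X(1-3) by blast
qed

lemma cw_constructible_balanced_module:
  "cw_constructible c V E l \<Longrightarrow> 1 \<le> m \<Longrightarrow> m \<le> card V
    \<Longrightarrow> \<exists>X\<subseteq>V. m \<le> card X \<and> card X < 2 * m \<and> k_module c V E X"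
  using cw_constructible_balanced_labelled_module labelled_k_module_imp_k_module by metis

lemma k_module_crossing_card_le:
  assumes "k_module c V E X" "finite J"
    and "\<forall>j\<in>J. u j \<in> X \<and> w j \<in> V - X \<and> (u j, w j) \<in> E"
    and "\<forall>i\<in>J. \<forall>j\<in>J. i \<noteq> j \<longrightarrow> (u i, w j) \<notin> E \<or> (u j, w i) \<notin> E"
  shows "card J \<le> c"
proof -
  obtain f where f: "\<forall>x\<in>X. f x < c"
    "\<forall>u\<in>X. \<forall>v\<in>X. f u = f v \<longrightarrow> (\<forall>w\<in>V - X. (u, w) \<in> E \<longleftrightarrow> (v, w) \<in> E)"
    using assms(1) unfolding k_module_def by blast
  have "inj_on (f \<circ> u) J"
    using assms(3,4) f(2) by (intro inj_onI) (metis comp_apply)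
  then have "card J = card ((f \<circ> u) ` J)" by (rule card_image[symmetric])
  also have "\<dots> \<le> card {..<c}"
    using f(1) assms(3) by (intro card_mono) auto
  finally show ?thesis by simp
qed

lemma k_module_split_crossing_card_le:
  assumes "k_module c V E X" "sym E" "E \<subseteq> V \<times> V" "finite J"
    and edge: "\<forall>j\<in>J. (x j, y j) \<in> E"
    and split: "\<forall>i\<in>J. \<forall>j\<in>J. x i \<in> X \<longleftrightarrow> y j \<notin> X"
    and cross: "\<forall>i\<in>J. \<forall>j\<in>J. i \<noteq> j \<longrightarrow> (x i, y j) \<notin> E \<or> (x j, y i) \<notin> E"
  shows "card J \<le> c"
proof (cases "J = {}")
  case False
  then obtain j0 where "j0 \<in> J" by blast
  have xy: "x j \<in> V" "y j \<in> V" "x j \<in> X \<longleftrightarrow> x j0 \<in> X" "y j \<in> X \<longleftrightarrow> x j0 \<notin> X" if "j \<in> J" for j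
  proof -
    show "x j \<in> V" "y j \<in> V" using edge assms(3) that by auto
    have "x j \<in> X \<longleftrightarrow> y j0 \<notin> X" "x j0 \<in> X \<longleftrightarrow> y j0 \<notin> X" "x j0 \<in> X \<longleftrightarrow> y j \<notin> X"
      using split[rule_format, OF that \<open>j0 \<in> J\<close>] split[rule_format, OF \<open>j0 \<in> J\<close> \<open>j0 \<in> J\<close>]
        split[rule_format, OF \<open>j0 \<in> J\<close> that] .
    then show "x j \<in> X \<longleftrightarrow> x j0 \<in> X" "y j \<in> X \<longleftrightarrow> x j0 \<notin> X" by simp_all
  qed
  show ?thesis
  proof (cases "x j0 \<in> X")
    case True
    then have "\<forall>j\<in>J. x j \<in> X \<and> y j \<in> V - X \<and> (x j, y j) \<in> E" using xy edge by simp
    then show ?thesis using k_module_crossing_card_le[OF assms(1,4) _ cross] by simp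
  next
    case False
    then have "\<forall>j\<in>J. y j \<in> X \<and> x j \<in> V - X \<and> (y j, x j) \<in> E"
      using xy edge \<open>sym E\<close> by (simp add: symD)
    moreover have "\<forall>i\<in>J. \<forall>j\<in>J. i \<noteq> j \<longrightarrow> (y i, x j) \<notin> E \<or> (y j, x i) \<notin> E"
      using cross \<open>sym E\<close> by (meson symD)
    ultimately show ?thesis using k_module_crossing_card_le[OF assms(1,4)] by simp
  qed
qed simp

lemma cw_constructible_edgeless:
  "finite V \<Longrightarrow> V \<noteq> {} \<Longrightarrow> \<forall>v\<in>V. l v < c \<Longrightarrow> cw_constructible c V {} l"
proof (induction V rule: finite_ne_induct)
  case (singleton x)
  then show ?case by (simp add: cw_constructible.single)
next
  case (insert x F)
  then have "cw_constructible c ({x} \<union> F) ({} \<union> {}) (\<lambda>v. if v \<in> {x} then l v else l v)"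
    by (intro cw_constructible.union) (auto intro: cw_constructible.single)
  then show ?case by simp
qed

lemma cw_constructible_add_edge:
  assumes "cw_constructible c V E l" "inj_on l V" "u \<in> V" "w \<in> V" "u \<noteq> w"
  shows "cw_constructible c V (E \<union> {(u, w), (w, u)}) l"
proof -
  have "l u < c" "l w < c" "l u \<noteq> l w"
    using cw_constructible_wf[OF assms(1)] assms(2-5) by (auto dest: inj_onD)
  from cw_constructible.join[OF assms(1) this]
  have "cw_constructible c V
      (E \<union> {(x, y). x \<in> V \<and> y \<in> V \<and> (l x = l u \<and> l y = l w \<or> l x = l w \<and> l y = l u)}) l" .
  moreover have "{(x, y). x \<in> V \<and> y \<in> V \<and> (l x = l u \<and> l y = l w \<or> l x = l w \<and> l y = l u)}
      = {(u, w), (w, u)}"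
    using assms(2-4) by (auto dest: inj_onD)
  ultimately show ?thesis by simp
qed

lemma cw_constructible_add_edges:
  assumes "finite F" "cw_constructible c V E l" "inj_on l V" "F \<subseteq> {(u, w). u \<in> V \<and> w \<in> V \<and> u \<noteq> w}"
  shows "cw_constructible c V (E \<union> F \<union> F\<inverse>) l"
  using assms(1,4)
proof (induction F rule: finite_induct)
  case empty
  then show ?case using assms(2) by simp
next
  case (insert z F)
  obtain u w where "z = (u, w)" "u \<in> V" "w \<in> V" "u \<noteq> w" using insert.prems by auto
  then have "cw_constructible c V ((E \<union> F \<union> F\<inverse>) \<union> {(u, w), (w, u)}) l"
    using insert by (intro cw_constructible_add_edge[OF _ assms(3)]) auto
  moreover have "(E \<union> F \<union> F\<inverse>) \<union> {(u, w), (w, u)} = E \<union> insert z F \<union> (insert z F)\<inverse>"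
    using \<open>z = (u, w)\<close> by auto
  ultimately show ?case by simp
qed

lemma clique_width_attained:
  assumes "finite V" "V \<noteq> {}" "E \<subseteq> V \<times> V" "sym E" "irrefl E"
  shows "\<exists>l. cw_constructible (clique_width V E) V E l"
proof -
  obtain l :: "'a \<Rightarrow> nat" and n where l: "l ` V = {i. i < n}" "inj_on l V"
    using finite_imp_inj_to_nat_seg[OF assms(1)] by blast
  have "cw_constructible n V {} l"
    using l(1) assms(1,2) by (intro cw_constructible_edgeless) auto
  moreover have "finite E" using assms(1,3) finite_subset by blast
  moreover have "E \<subseteq> {(u, w). u \<in> V \<and> w \<in> V \<and> u \<noteq> w}"
    using assms(3,5) by (auto simp: irrefl_def)
  ultimately have "cw_constructible n V ({} \<union> E \<union> E\<inverse>) l"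
    using l(2) by (intro cw_constructible_add_edges)
  then have "cw_constructible n V E l"
    using assms(4) by (simp add: sym_conv_converse_eq)
  show ?thesis
    unfolding clique_width_def by (rule LeastI_ex) (use \<open>cw_constructible n V E l\<close> in blast)
qed

lemma G_E_sym: "(x, y) \<in> G_E k \<Longrightarrow> (y, x) \<in> G_E k"
  unfolding G_E_def by blast

lemma sym_G_E: "sym (G_E k)"
  unfolding sym_def using G_E_sym by blast

lemma card_G_V: "card (G_V k) = 3 ^ k"
  unfolding G_V_def by simp

lemma G_E_subset: "G_E k \<subseteq> G_V k \<times> G_V k"
  unfolding G_E_def G_V_def by auto

lemma below_bounds: "x \<in> below i b \<Longrightarrow> b * 3 ^ i \<le> x \<and> x < Suc b * 3 ^ i"
  unfolding below_def by auto

lemma irrefl_G_E: "irrefl (G_E k)"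
  unfolding irrefl_def G_E_def by (auto dest!: below_bounds)

lemma G_E_path: "Suc x < 3 ^ k \<Longrightarrow> (x, Suc x) \<in> G_E k"
  unfolding G_E_def by auto

lemma G_E_odd_far:
  assumes "odd x" "y + 2 \<le> x \<or> x + 2 \<le> y"
  shows "(x, y) \<notin> G_E k"
  using assms unfolding G_E_def by auto

lemma ternary_digit_shift:
  fixes b s :: nat
  assumes "s < 3 ^ i" "d < i"
  shows "((b * 3 ^ i + s) div 3 ^ d) mod 3 = (s div 3 ^ d) mod 3"
proof -
  obtain e where i: "i = Suc (d + e)" using less_imp_Suc_add[OF assms(2)] ..
  have split: "b * 3 ^ i + s = s + (3 * (b * 3 ^ e)) * 3 ^ d" unfolding i by (simp add: power_add)
  have "(s + (3 * (b * 3 ^ e)) * 3 ^ d) div 3 ^ d = 3 * (b * 3 ^ e) + s div 3 ^ d"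
    by (rule div_mult_self1) simp
  then have "(b * 3 ^ i + s) div 3 ^ d = 3 * (b * 3 ^ e) + s div 3 ^ d" by (simp only: split)
  then show ?thesis by simp
qed

lemma below_digit_le_one: "x \<in> below i b \<Longrightarrow> d < i \<Longrightarrow> (x div 3 ^ d) mod 3 \<le> 1"
  unfolding below_def by (auto simp: ternary_digit_shift)

lemma G_E_digit_two:
  assumes "(p div 3 ^ d) mod 3 = 2" "p + 2 * 3 ^ d \<le> q \<or> q + 2 * 3 ^ d \<le> p"
  shows "(2 * p, 2 * q) \<notin> G_E k"
proof
  assume "(2 * p, 2 * q) \<in> G_E k"
  moreover have "2 * p + 1 \<noteq> 2 * q" "2 * q + 1 \<noteq> 2 * p" by presburger+
  ultimately obtain i b where ib: "p \<in> below i b \<and> q \<in> below i (Suc b) \<or> q \<in> below i b \<and> p \<in> below i (Suc b)"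
    unfolding G_E_def by auto
  then have "\<not> d < i" using below_digit_le_one assms(1) by fastforce
  then have "(3::nat) ^ i \<le> 3 ^ d" by simp
  moreover have "q < p + 2 * 3 ^ i \<and> p < q + 2 * 3 ^ i"
    using ib by (auto dest!: below_bounds)
  ultimately show False using assms(2) by linarith
qed

fun repunit3 :: "nat \<Rightarrow> nat" where
  "repunit3 0 = 0"
| "repunit3 (Suc j) = 3 * repunit3 j + 1"

lemma repunit3_eq: "2 * repunit3 j + 1 = 3 ^ j"
  by (induction j) auto

lemma repunit3_digit: "d < j \<Longrightarrow> (repunit3 j div 3 ^ d) mod 3 = 1"
proof (induction j arbitrary: d)
  case (Suc j)
  have "repunit3 (Suc j) div 3 = repunit3 j" by simp
  with Suc show ?case by (cases d) (auto simp: div_mult2_eq)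
qed simp

lemma block_ends_below: "b * 3 ^ j \<in> below j b" "b * 3 ^ j + repunit3 j \<in> below j b"
  unfolding below_def using repunit3_eq[of j] repunit3_digit[of _ j]
  by (auto intro!: exI[of _ 0] exI[of _ "repunit3 j"])

lemma G_E_below:
  assumes "x \<in> below i b" "y \<in> below i (Suc b)" "i < k" "2 * x < 3 ^ k" "2 * y < 3 ^ k"
  shows "(2 * x, 2 * y) \<in> G_E k"
  unfolding G_E_def using assms by auto

lemma G_E_block_ends:
  assumes "2 * (Suc b * 3 ^ j + repunit3 j) < 3 ^ k"
  shows "(2 * (b * 3 ^ j), 2 * (Suc b * 3 ^ j + repunit3 j)) \<in> G_E k"
proof (rule G_E_below)
  have "(3::nat) ^ j \<le> Suc b * 3 ^ j" by simp
  also have "\<dots> < 3 ^ k" using assms by simp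
  finally show "j < k" by simp
  show "2 * (b * 3 ^ j) < 3 ^ k" by (rule le_less_trans[OF _ assms]) simp
qed (rule block_ends_below assms)+

definition cuts :: "nat \<Rightarrow> nat set \<Rightarrow> nat set" where
  "cuts n X = {x. Suc x < n \<and> (x \<in> X \<longleftrightarrow> Suc x \<notin> X)}"

lemma finite_cuts: "finite (cuts n X)"
  unfolding cuts_def by (rule finite_subset[of _ "{..<n}"]) auto

lemma cut_between:
  assumes "a \<le> y" "y < n" "(a \<in> X) \<noteq> (y \<in> X)"
  shows "\<exists>z\<in>cuts n X. a \<le> z \<and> z < y"
  using assms
proof (induction y)
  case (Suc y)
  then have "a \<le> y" using le_Suc_eq by blast
  show ?case
  proof (cases "(a \<in> X) = (y \<in> X)")
    case True
    then have "y \<in> cuts n X" using Suc.prems unfolding cuts_def by auto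
    then show ?thesis using \<open>a \<le> y\<close> by blast
  next
    case False
    then show ?thesis using Suc \<open>a \<le> y\<close> by (meson Suc_lessD less_SucI)
  qed
qed simp

lemma mem_eq_if_no_cut_between:
  "\<forall>z\<in>cuts n X. \<not> (a \<le> z \<and> z < y) \<Longrightarrow> a \<le> y \<Longrightarrow> y < n \<Longrightarrow> (y \<in> X \<longleftrightarrow> a \<in> X)"
  using cut_between by blast

lemma card_residue_class_ge:
  fixes A :: "nat set"
  assumes "finite A" "3 * N \<le> card A"
  shows "\<exists>\<rho>. N \<le> card {x\<in>A. x mod 3 = \<rho>}"
proof (rule ccontr)
  assume "\<not> ?thesis"
  then have small: "card {x\<in>A. x mod 3 = \<rho>} < N" for \<rho> by (simp add: not_le)
  have "A = {x\<in>A. x mod 3 = 0} \<union> {x\<in>A. x mod 3 = 1} \<union> {x\<in>A. x mod 3 = 2}" by auto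
  then have "card A \<le> card {x\<in>A. x mod 3 = 0} + card {x\<in>A. x mod 3 = 1} + card {x\<in>A. x mod 3 = 2}"
    by (metis (no_types, lifting) card_Un_le add_le_mono le_trans order_refl)
  then show False using small[of 0] small[of 1] small[of 2] assms(2) by linarith
qed

lemma exists_gap_scale:
  fixes g :: "nat \<Rightarrow> nat"
  assumes "mono g" "finite D" "card D \<le> C"
  shows "\<exists>t\<le>C * C. \<forall>x\<in>D. \<forall>y\<in>D. x < y \<longrightarrow> y - x < g t \<or> g (Suc t) \<le> y - x"
proof (rule ccontr)
  define diffs where "diffs = (\<lambda>(x, y). y - x) ` (D \<times> D)"
  assume "\<not> ?thesis"
  then have "\<forall>t\<in>{..C * C}. \<exists>d. d \<in> diffs \<and> g t \<le> d \<and> d < g (Suc t)"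
    unfolding diffs_def by (fastforce simp: not_less)
  then obtain d where d: "\<forall>t\<in>{..C * C}. d t \<in> diffs \<and> g t \<le> d t \<and> d t < g (Suc t)"
    by metis
  have "d t < d t'" if "t < t'" "t \<in> {..C * C}" "t' \<in> {..C * C}" for t t'
  proof -
    have "d t < g (Suc t)" "g t' \<le> d t'" using d that(2,3) by auto
    moreover have "g (Suc t) \<le> g t'" using that(1) \<open>mono g\<close> by (simp add: monoD)
    ultimately show ?thesis by linarith
  qed
  then have "inj_on d {..C * C}" by (metis inj_onI linorder_neqE_nat less_irrefl)
  then have "Suc (C * C) = card (d ` {..C * C})" by (simp add: card_image)
  also have "\<dots> \<le> card diffs"
    using d assms(2) unfolding diffs_def by (intro card_mono) auto
  also have "\<dots> \<le> card (D \<times> D)" unfolding diffs_def by (rule card_image_le) (simp add: assms(2))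
  also have "\<dots> \<le> C * C" using assms(3) by (simp add: card_cartesian_product mult_le_mono)
  finally show False by simp
qed

definition calm :: "nat \<Rightarrow> nat set \<Rightarrow> nat \<Rightarrow> nat \<Rightarrow> bool" where
  "calm n X G y \<longleftrightarrow> (\<forall>b\<in>cuts n X. y + G < b \<or> b + G < y)"

lemma calm_point_exists:
  assumes "S \<subseteq> {..<n}" "2 * Z + card (cuts n X) * (2 * G + 1) < card S"
  shows "\<exists>y\<in>S. calm n X G y \<and> Z \<le> y \<and> y + Z \<le> n"
proof (rule ccontr)
  assume none: "\<not> ?thesis"
  let ?near = "\<Union>b\<in>cuts n X. {b - G..b + G}"
  have "y \<in> {..<Z} \<union> {n - Z..<n} \<union> ?near" if "y \<in> S" for y
  proof (cases "Z \<le> y \<and> y + Z \<le> n")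
    case True
    then have "\<not> calm n X G y" using none that by blast
    then obtain b where "b \<in> cuts n X" "\<not> y + G < b" "\<not> b + G < y"
      unfolding calm_def by blast
    then have "y \<in> ?near" by (intro UN_I[of b]) auto
    then show ?thesis by blast
  next
    case False
    then show ?thesis using that assms(1) by auto
  qed
  then have "card S \<le> card ({..<Z} \<union> {n - Z..<n} \<union> ?near)"
    by (intro card_mono) (simp_all add: finite_cuts subset_iff)
  also have "\<dots> \<le> card {..<Z} + card {n - Z..<n} + card ?near"
    by (meson card_Un_le add_le_mono le_trans order_refl)
  also have "\<dots> \<le> Z + Z + card (cuts n X) * (2 * G + 1)"
  proof -
    have "card ?near \<le> (\<Sum>b\<in>cuts n X. card {b - G..b + G})"
      by (rule card_UN_le) (rule finite_cuts)
    also have "\<dots> \<le> card (cuts n X) * (2 * G + 1)"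
      using sum_bounded_above[of "cuts n X" "\<lambda>b. card {b - G..b + G}" "2 * G + 1"] by simp
    finally show ?thesis by simp
  qed
  finally show False using assms(2) by simp
qed

lemma cluster_after_calm_point:
  assumes gaps: "\<forall>x\<in>cuts n X. \<forall>y\<in>cuts n X. x < y \<longrightarrow> y - x < G \<or> Z \<le> y - x"
    and "0 < G" "calm n X G a" "z0 \<in> cuts n X" "a \<le> z0"
  obtains b1 b2 where "a + G < b1" "b1 \<le> z0" "b1 \<le> b2" "b2 < b1 + G" "b2 \<in> cuts n X"
    "\<forall>z\<in>cuts n X. a \<le> z \<longrightarrow> b1 \<le> z"
    "\<forall>z\<in>cuts n X. z < b1 \<longrightarrow> z + Z \<le> b1"
    "\<forall>z\<in>cuts n X. b2 < z \<longrightarrow> b1 + Z \<le> z"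
proof -
  define b1 where "b1 = (LEAST z. z \<in> cuts n X \<and> a \<le> z)"
  have "z0 \<in> cuts n X \<and> a \<le> z0" using assms(4,5) by simp
  then have b1: "b1 \<in> cuts n X \<and> a \<le> b1" "b1 \<le> z0"
    unfolding b1_def by (rule LeastI, rule Least_le)
  have first: "\<forall>z\<in>cuts n X. a \<le> z \<longrightarrow> b1 \<le> z"
    unfolding b1_def by (simp add: Least_le)
  have "a + G < b1 \<or> b1 + G < a" using assms(3) b1(1) unfolding calm_def by blast
  then have far: "a + G < b1" using b1(1) by linarith
  define B where "B = {z\<in>cuts n X. b1 \<le> z \<and> z < b1 + G}"
  define b2 where "b2 = Max B"
  have "finite B" "b1 \<in> B" unfolding B_def using finite_cuts b1(1) assms(2) by auto
  then have "b2 \<in> B" "\<forall>z\<in>B. z \<le> b2" unfolding b2_def using Max_in by auto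
  then have b2: "b2 \<in> cuts n X" "b1 \<le> b2" "b2 < b1 + G"
    "\<forall>z\<in>cuts n X. b1 \<le> z \<and> z < b1 + G \<longrightarrow> z \<le> b2"
    unfolding B_def by auto
  show ?thesis
  proof (rule that[OF far b1(2) b2(2,3,1) first])
    show "\<forall>z\<in>cuts n X. z < b1 \<longrightarrow> z + Z \<le> b1"
    proof (intro ballI impI)
      fix z assume z: "z \<in> cuts n X" "z < b1"
      then have "z < a" using first by (meson not_le)
      moreover have "b1 - z < G \<or> Z \<le> b1 - z" using gaps z b1(1) by blast
      ultimately show "z + Z \<le> b1" using far by linarith
    qed
    show "\<forall>z\<in>cuts n X. b2 < z \<longrightarrow> b1 + Z \<le> z"
    proof (intro ballI impI)
      fix z assume z: "z \<in> cuts n X" "b2 < z"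
      then have "\<not> z < b1 + G" using b2(2,4) by (meson le_less_trans less_imp_le not_le)
      moreover have "z - b1 < G \<or> Z \<le> z - b1" using gaps z b1(1) b2(2) by auto
      ultimately show "b1 + Z \<le> z" using b2(2) z(2) by linarith
    qed
  qed
qed

definition split_window :: "nat \<Rightarrow> nat set \<Rightarrow> nat \<Rightarrow> nat \<Rightarrow> nat \<Rightarrow> nat \<Rightarrow> bool" where
  "split_window n X G Z b1 b2 \<longleftrightarrow> b1 \<le> b2 \<and> b2 < b1 + G \<and> Z \<le> b1 \<and> b1 + Z \<le> n \<and>
     (\<forall>y y'. b1 < y + Z \<and> y \<le> b1 \<and> b2 < y' \<and> y' \<le> b1 + Z \<longrightarrow> (y \<in> X \<longleftrightarrow> y' \<notin> X))"

lemma split_window_mono: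
  assumes "split_window n X G Z b1 b2" "Z' \<le> Z"
  shows "split_window n X G Z' b1 b2"
proof -
  have "b1 < y + Z" "y' \<le> b1 + Z" if "b1 < y + Z'" "y' \<le> b1 + Z'" for y y'
    using that assms(2) by linarith+
  then show ?thesis using assms unfolding split_window_def by (meson le_trans add_le_mono order_refl)
qed

lemma split_window_between_calm_points:
  assumes gaps: "\<forall>x\<in>cuts n X. \<forall>y\<in>cuts n X. x < y \<longrightarrow> y - x < G \<or> Z \<le> y - x"
    and "0 < G" "3 * G + 2 \<le> Z"
    and "a < c" "calm n X G a" "calm n X G c" "Z \<le> a" "c + Z \<le> n" "(a \<in> X) \<noteq> (c \<in> X)"
  shows "\<exists>b1 b2. split_window n X G Z b1 b2"
  using assms(4-)
proof (induction "c - a" arbitrary: a rule: less_induct)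
  case less
  have "c < n" using less.prems(5) assms(3) by linarith
  obtain z0 where z0: "z0 \<in> cuts n X" "a \<le> z0" "z0 < c"
    using cut_between[OF less_imp_le[OF less.prems(1)] \<open>c < n\<close> less.prems(6)] by blast
  obtain b1 b2 where b: "a + G < b1" "b1 \<le> z0" "b1 \<le> b2" "b2 < b1 + G" "b2 \<in> cuts n X"
    and first: "\<forall>z\<in>cuts n X. a \<le> z \<longrightarrow> b1 \<le> z"
    and left_gap: "\<forall>z\<in>cuts n X. z < b1 \<longrightarrow> z + Z \<le> b1"
    and right_gap: "\<forall>z\<in>cuts n X. b2 < z \<longrightarrow> b1 + Z \<le> z"
    by (rule cluster_after_calm_point[OF gaps assms(2) less.prems(2) z0(1,2)])
  have "b1 + Z < n" using b(2) z0(3) less.prems(5) by linarith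
  have a_b1: "a \<in> X \<longleftrightarrow> b1 \<in> X"
  proof (rule mem_eq_if_no_cut_between[symmetric])
    show "\<forall>z\<in>cuts n X. \<not> (a \<le> z \<and> z < b1)" using first by (simp add: not_less)
  qed (use b(1) \<open>b1 + Z < n\<close> in linarith)+
  have left: "y \<in> X \<longleftrightarrow> b1 \<in> X" if "b1 < y + Z" "y \<le> b1" for y
  proof (rule mem_eq_if_no_cut_between[symmetric])
    show "\<forall>z\<in>cuts n X. \<not> (y \<le> z \<and> z < b1)" using left_gap that(1) by fastforce
  qed (use that \<open>b1 + Z < n\<close> in linarith)+
  have right: "y \<in> X \<longleftrightarrow> Suc b2 \<in> X" if "b2 < y" "y \<le> b1 + Z" for y
  proof (rule mem_eq_if_no_cut_between)
    show "\<forall>z\<in>cuts n X. \<not> (Suc b2 \<le> z \<and> z < y)" using right_gap that(2) by fastforce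
  qed (use that \<open>b1 + Z < n\<close> in linarith)+
  show ?case
  proof (cases "b1 \<in> X \<longleftrightarrow> Suc b2 \<in> X")
    case False
    have "b1 \<le> b2" "b2 < b1 + G" "Z \<le> b1" "b1 + Z \<le> n"
      using b less.prems(4) \<open>b1 + Z < n\<close> by linarith+
    moreover have "y \<in> X \<longleftrightarrow> y' \<notin> X" if "b1 < y + Z" "y \<le> b1" "b2 < y'" "y' \<le> b1 + Z" for y y'
      using left[OF that(1,2)] right[OF that(3,4)] False by blast
    ultimately show ?thesis unfolding split_window_def by blast
  next
    case True
    define a' where "a' = Suc (b2 + G)"
    have "b2 < a'" "a' \<le> b1 + Z" using b(4) assms(3) unfolding a'_def by linarith+
    then have a'_mem: "a' \<in> X \<longleftrightarrow> a \<in> X" using right True a_b1 by blast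
    have "calm n X G a'"
      unfolding calm_def
    proof
      fix z assume "z \<in> cuts n X"
      then have "z \<le> b2 \<or> b1 + Z \<le> z" using right_gap not_le by blast
      then show "a' + G < z \<or> z + G < a'" using b(4) assms(3) unfolding a'_def by linarith
    qed
    moreover have "a' < c"
    proof (rule ccontr)
      assume "\<not> a' < c"
      show False
      proof (cases "c \<le> b1")
        case True
        then have "\<forall>z\<in>cuts n X. \<not> (a \<le> z \<and> z < c)" using first by fastforce
        then show False
          using mem_eq_if_no_cut_between[of n X a c] less.prems(1,6) \<open>c < n\<close> by auto
      next
        case False
        have "c + G < b2 \<or> b2 + G < c" using less.prems(3) b(5) unfolding calm_def by blast
        then have "c = a'" using False b(4) \<open>\<not> a' < c\<close> unfolding a'_def by linarith
        then show False using a'_mem less.prems(6) by simp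
      qed
    qed
    moreover have "c - a' < c - a" "Z \<le> a'" using less.prems(1,4) b(1,3) unfolding a'_def by linarith+
    moreover have "(a' \<in> X) \<noteq> (c \<in> X)" using a'_mem less.prems(6) by simp
    ultimately show ?thesis using less.hyps less.prems(3,5) by blast
  qed
qed

lemma split_window_exists:
  fixes X :: "nat set"
  assumes "X \<subseteq> {..<n}" "card (cuts n X) \<le> C" "2 \<le> e"
    and "(3 * C + 2) * 3 ^ (e * Suc (C * C)) < card X"
    and "(3 * C + 2) * 3 ^ (e * Suc (C * C)) < card ({..<n} - X)"
  shows "\<exists>t\<le>C * C. \<exists>b1 b2. split_window n X (3 ^ (e * t)) (3 ^ (e * t + e)) b1 b2"
proof -
  have "mono (\<lambda>t. (3::nat) ^ (e * t))" by (intro monoI power_increasing mult_le_mono2) auto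
  then obtain t where t: "t \<le> C * C" and gaps:
    "\<forall>x\<in>cuts n X. \<forall>y\<in>cuts n X. x < y \<longrightarrow> y - x < 3 ^ (e * t) \<or> 3 ^ (e * Suc t) \<le> y - x"
    using exists_gap_scale[OF _ finite_cuts assms(2)] by blast
  define G where "G = (3::nat) ^ (e * t)"
  define Z where "Z = (3::nat) ^ (e * Suc t)"
  have "0 < G" unfolding G_def by simp
  have "(3::nat) ^ 2 \<le> 3 ^ e" using assms(3) by (rule power_increasing) simp
  then have "G * 9 \<le> G * 3 ^ e" by simp
  also have "\<dots> = Z" unfolding G_def Z_def by (simp add: power_add)
  finally have "3 * G + 2 \<le> Z" "G \<le> Z" using \<open>0 < G\<close> by linarith+
  have "Z \<le> 3 ^ (e * Suc (C * C))" unfolding Z_def using t by (intro power_increasing) auto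
  moreover have "2 * Z + card (cuts n X) * (2 * G + 1) \<le> (3 * C + 2) * Z"
  proof -
    have "card (cuts n X) * (2 * G + 1) \<le> C * (3 * Z)"
      using assms(2) \<open>G \<le> Z\<close> \<open>0 < G\<close> by (intro mult_le_mono) auto
    then show ?thesis by (simp add: algebra_simps)
  qed
  ultimately have count: "2 * Z + card (cuts n X) * (2 * G + 1) < card X"
    "2 * Z + card (cuts n X) * (2 * G + 1) < card ({..<n} - X)"
    using assms(4,5) by (meson le_less_trans mult_le_mono2)+
  obtain p where p: "p \<in> X" "calm n X G p" "Z \<le> p" "p + Z \<le> n"
    using calm_point_exists[OF assms(1) count(1)] by blast
  obtain q where q: "q \<in> {..<n} - X" "calm n X G q" "Z \<le> q" "q + Z \<le> n"
    using calm_point_exists[OF _ count(2)] by blast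
  note between = split_window_between_calm_points[OF gaps[folded G_def Z_def] \<open>0 < G\<close> \<open>3 * G + 2 \<le> Z\<close>]
  have "p \<noteq> q" "(p \<in> X) \<noteq> (q \<in> X)" using p(1) q(1) by auto
  then consider "p < q" | "q < p" by linarith
  then have "\<exists>b1 b2. split_window n X G Z b1 b2"
  proof cases
    case 1
    then show ?thesis using between[OF 1 p(2) q(2) p(3) q(4)] \<open>(p \<in> X) \<noteq> (q \<in> X)\<close> by blast
  next
    case 2
    then show ?thesis using between[OF 2 q(2) p(2) q(3) p(4)] \<open>(p \<in> X) \<noteq> (q \<in> X)\<close> by metis
  qed
  moreover have "(3::nat) ^ (e * t + e) = Z" unfolding Z_def by (simp add: algebra_simps)
  ultimately show ?thesis using t unfolding G_def by metis
qed

lemma card_cuts_lt_if_k_module: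
  assumes "k_module c (G_V k) (G_E k) X"
  shows "card (cuts (3 ^ k) X) < 3 * Suc c"
proof (rule ccontr)
  assume "\<not> ?thesis"
  then obtain \<rho> where "Suc c \<le> card {x\<in>cuts (3 ^ k) X. x mod 3 = \<rho>}"
    using card_residue_class_ge[OF finite_cuts] by (meson not_less)
  then obtain J where J: "J \<subseteq> {x\<in>cuts (3 ^ k) X. x mod 3 = \<rho>}" "card J = Suc c"
    by (meson obtain_subset_with_card_n)
  have "finite J" using J(1) finite_cuts finite_subset by fastforce
  define u where "u x = (if x \<in> X then x else Suc x)" for x
  define w where "w x = (if x \<in> X then Suc x else x)" for x
  have "card J \<le> c"
  proof (rule k_module_crossing_card_le[OF assms \<open>finite J\<close>])
    show "\<forall>j\<in>J. u j \<in> X \<and> w j \<in> G_V k - X \<and> (u j, w j) \<in> G_E k"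
    proof
      fix j assume "j \<in> J"
      then have j: "Suc j < 3 ^ k" "(j \<in> X) \<noteq> (Suc j \<in> X)" using J(1) unfolding cuts_def by auto
      then show "u j \<in> X \<and> w j \<in> G_V k - X \<and> (u j, w j) \<in> G_E k"
        using G_E_path[OF j(1)] G_E_sym[OF G_E_path[OF j(1)]] unfolding u_def w_def G_V_def by auto
    qed
    show "\<forall>i\<in>J. \<forall>j\<in>J. i \<noteq> j \<longrightarrow> (u i, w j) \<notin> G_E k \<or> (u j, w i) \<notin> G_E k"
    proof (intro ballI impI)
      fix i j assume ij: "i \<in> J" "j \<in> J" "i \<noteq> j"
      then have "i mod 3 = j mod 3" using J(1) by auto
      then have far: "i + 3 \<le> j \<or> j + 3 \<le> i" using ij(3) by presburger
      have "odd (u i) \<or> odd (w i)" unfolding u_def w_def by auto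
      then show "(u i, w j) \<notin> G_E k \<or> (u j, w i) \<notin> G_E k"
      proof
        assume "odd (u i)"
        then have "(u i, w j) \<notin> G_E k" using far by (intro G_E_odd_far) (auto simp: u_def w_def)
        then show ?thesis ..
      next
        assume "odd (w i)"
        then have "(w i, u j) \<notin> G_E k" using far by (intro G_E_odd_far) (auto simp: u_def w_def)
        then show ?thesis using G_E_sym by blast
      qed
    qed
  qed
  then show False using J(2) by simp
qed

definition straddles :: "nat \<Rightarrow> nat \<Rightarrow> nat \<Rightarrow> nat \<Rightarrow> bool" where
  "straddles \<beta> \<gamma> l b \<longleftrightarrow> b mod 3 \<noteq> 0 \<and> b * 3 ^ l + 2 * 3 ^ (l - 4) < \<beta> \<and>
     \<beta> + \<gamma> + 2 * 3 ^ (l - 4) \<le> Suc b * 3 ^ l + repunit3 l"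

lemma power3_eq_81_mult: "4 \<le> l \<Longrightarrow> (3::nat) ^ l = 81 * 3 ^ (l - 4)"
proof -
  assume "4 \<le> l"
  then obtain m where "l = m + 4" using le_Suc_ex by (metis add.commute)
  then show ?thesis by (simp add: power_add)
qed

lemma straddles_if_residue:
  assumes "4 \<le> l" "\<gamma> \<le> 3 ^ (l - 4)" "3 ^ Suc l \<le> \<beta>"
    and "\<beta> mod 3 ^ Suc l \<le> 37 * 3 ^ (l - 4) \<or> 83 * 3 ^ (l - 4) < \<beta> mod 3 ^ Suc l"
  shows "\<exists>b. straddles \<beta> \<gamma> l b"
proof -
  define v where "v = (3::nat) ^ (l - 4)"
  have U: "(3::nat) ^ l = 81 * v" "(3::nat) ^ Suc l = 243 * v"
    unfolding v_def using power3_eq_81_mult[OF assms(1)] by simp_all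
  have rep: "40 * v \<le> repunit3 l"
    using repunit3_eq[of l] U(1) by (simp add: v_def)
  define s where "s = \<beta> div (243 * v)"
  define r where "r = \<beta> mod (243 * v)"
  have "0 < v" unfolding v_def by simp
  then have "r < 243 * v" unfolding r_def by simp
  have "\<beta> = s * (243 * v) + r" unfolding s_def r_def by (rule div_mult_mod_eq[symmetric])
  then have \<beta>: "\<beta> = 243 * (s * v) + r" by simp
  have "\<gamma> \<le> v" using assms(2) unfolding v_def .
  have "s \<noteq> 0"
  proof
    assume "s = 0"
    then show False using assms(3) U(2) \<beta> \<open>r < 243 * v\<close> by simp
  qed
  have straddles_iff: "straddles \<beta> \<gamma> l b \<longleftrightarrow> b mod 3 \<noteq> 0 \<and> b * (81 * v) + 2 * v < \<beta> \<and>
      \<beta> + \<gamma> + 2 * v \<le> b * (81 * v) + 81 * v + repunit3 l" for b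
    unfolding straddles_def U(1) v_def by (simp add: algebra_simps)
  have "\<beta> mod 3 ^ Suc l = r" unfolding r_def U(2) ..
  then have "r \<le> 37 * v \<or> 83 * v < r" using assms(4) unfolding v_def by simp
  then consider "r \<le> 37 * v" | "83 * v < r" "r \<le> 199 * v" | "199 * v < r" by linarith
  then show ?thesis
  proof cases
    case 1
    obtain s0 where "s = Suc s0" using \<open>s \<noteq> 0\<close> not0_implies_Suc by blast
    then have eqs: "\<beta> = 243 * (s0 * v) + 243 * v + r"
      "(3 * s0 + 2) * (81 * v) = 243 * (s0 * v) + 162 * v" using \<beta> by simp_all
    have "straddles \<beta> \<gamma> l (3 * s0 + 2)" unfolding straddles_iff
    proof (intro conjI)
      show "(3 * s0 + 2) mod 3 \<noteq> 0" by presburger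
    qed (use eqs 1 rep \<open>\<gamma> \<le> v\<close> \<open>0 < v\<close> in linarith)+
    then show ?thesis ..
  next
    case 2
    have eq: "(3 * s + 1) * (81 * v) = 243 * (s * v) + 81 * v" by simp
    have "straddles \<beta> \<gamma> l (3 * s + 1)" unfolding straddles_iff
    proof (intro conjI)
      show "(3 * s + 1) mod 3 \<noteq> 0" by presburger
    qed (use eq 2 \<beta> rep \<open>\<gamma> \<le> v\<close> in linarith)+
    then show ?thesis ..
  next
    case 3
    have eq: "(3 * s + 2) * (81 * v) = 243 * (s * v) + 162 * v" by simp
    have "straddles \<beta> \<gamma> l (3 * s + 2)" unfolding straddles_iff
    proof (intro conjI)
      show "(3 * s + 2) mod 3 \<noteq> 0" by presburger
    qed (use eq 3 \<beta> rep \<open>\<gamma> \<le> v\<close> \<open>r < 243 * v\<close> in linarith)+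
    then show ?thesis ..
  qed
qed

lemma straddles_exists:
  assumes "4 \<le> j" "\<gamma> \<le> 3 ^ (j - 4)" "3 ^ (j + 2) \<le> \<beta>"
  shows "\<exists>l\<in>{j, Suc j}. \<exists>b. straddles \<beta> \<gamma> l b"
proof -
  define u where "u = (3::nat) ^ (j - 4)"
  have "Suc j - 4 = Suc (j - 4)" using assms(1) by simp
  then have U: "(3::nat) ^ Suc j = 243 * u" "(3::nat) ^ Suc (Suc j) = 729 * u" "(3::nat) ^ (Suc j - 4) = 3 * u"
    unfolding u_def using power3_eq_81_mult[OF assms(1)] by simp_all
  define r where "r = \<beta> mod (243 * u)"
  define r' where "r' = \<beta> mod (729 * u)"
  have "r = r' mod (243 * u)"
    unfolding r_def r'_def using mod_mod_cancel[of "243 * u" "729 * u" \<beta>] by simp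
  have "(3::nat) ^ Suc j \<le> 3 ^ (j + 2)" by simp
  then have \<beta>: "3 ^ Suc j \<le> \<beta>" "3 ^ Suc (Suc j) \<le> \<beta>" using assms(3) by simp_all
  show ?thesis
  proof (cases "r \<le> 37 * u \<or> 83 * u < r")
    case True
    then have "\<exists>b. straddles \<beta> \<gamma> j b"
      using straddles_if_residue[OF assms(1,2) \<beta>(1)] unfolding r_def U(1) u_def by blast
    then show ?thesis by blast
  next
    case False
    have "\<not> (111 * u < r' \<and> r' \<le> 249 * u)"
    proof
      assume r': "111 * u < r' \<and> r' \<le> 249 * u"
      show False
      proof (cases "r' < 243 * u")
        case True
        then have "r = r'" using \<open>r = r' mod (243 * u)\<close> by simp
        then show False using r' False by linarith
      next
        case False
        then have "r' mod (243 * u) = (r' - 243 * u) mod (243 * u)" by (simp add: le_mod_geq)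
        also have "\<dots> = r' - 243 * u" using r' by (intro mod_less) linarith
        finally show False using r' \<open>r = r' mod (243 * u)\<close> \<open>\<not> (r \<le> 37 * u \<or> 83 * u < r)\<close>
          by linarith
      qed
    qed
    then have "\<beta> mod 3 ^ Suc (Suc j) \<le> 37 * 3 ^ (Suc j - 4) \<or> 83 * 3 ^ (Suc j - 4) < \<beta> mod 3 ^ Suc (Suc j)"
      unfolding U(2,3) r'_def by linarith
    moreover have "\<gamma> \<le> 3 ^ (Suc j - 4)" using assms(2) unfolding U(3) u_def by simp
    ultimately have "\<exists>b. straddles \<beta> \<gamma> (Suc j) b"
      using straddles_if_residue[of "Suc j"] assms(1) \<beta>(2) by simp
    then show ?thesis by blast
  qed
qed

lemma straddles_bounds:
  assumes "straddles \<beta> \<gamma> l b"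
  shows "b * 3 ^ l < \<beta>" "\<beta> + \<gamma> \<le> Suc b * 3 ^ l + repunit3 l"
    "\<beta> \<le> b * 3 ^ l + 2 * 3 ^ l" "Suc b * 3 ^ l + repunit3 l < \<beta> + 2 * 3 ^ l"
proof -
  have "repunit3 l < 3 ^ l" using repunit3_eq[of l] by linarith
  moreover have "b * 3 ^ l + 2 * 3 ^ (l - 4) < \<beta>" "\<beta> + \<gamma> + 2 * 3 ^ (l - 4) \<le> Suc b * 3 ^ l + repunit3 l"
    using assms unfolding straddles_def by auto
  ultimately show "b * 3 ^ l < \<beta>" "\<beta> + \<gamma> \<le> Suc b * 3 ^ l + repunit3 l"
    "\<beta> \<le> b * 3 ^ l + 2 * 3 ^ l" "Suc b * 3 ^ l + repunit3 l < \<beta> + 2 * 3 ^ l"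
    by simp_all
qed

lemma straddles_edge:
  assumes "straddles \<beta> \<gamma> l b" "2 * (\<beta> + 3 ^ Suc l) \<le> 3 ^ k"
  shows "(2 * (b * 3 ^ l), 2 * (Suc b * 3 ^ l + repunit3 l)) \<in> G_E k"
proof (rule G_E_block_ends)
  have "2 * (Suc b * 3 ^ l + repunit3 l) < 2 * (\<beta> + 3 ^ Suc l)"
    using straddles_bounds(4)[OF assms(1)] by simp
  also have "\<dots> \<le> 3 ^ k" by (rule assms(2))
  finally show "2 * (Suc b * 3 ^ l + repunit3 l) < 3 ^ k" .
qed

lemma straddles_not_both_adjacent:
  assumes "straddles \<beta> \<gamma> l b" "straddles \<beta> \<gamma> l' b'" "l + 4 \<le> l'"
  shows "(2 * (b * 3 ^ l), 2 * (Suc b' * 3 ^ l' + repunit3 l')) \<notin> G_E k \<or>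
    (2 * (b' * 3 ^ l'), 2 * (Suc b * 3 ^ l + repunit3 l)) \<notin> G_E k"
proof -
  have "(3::nat) ^ l \<le> 3 ^ (l' - 4)" using assms(3) by (intro power_increasing) auto
  moreover have "b' * 3 ^ l' + 2 * 3 ^ (l' - 4) < \<beta>"
    "\<beta> + \<gamma> + 2 * 3 ^ (l' - 4) \<le> Suc b' * 3 ^ l' + repunit3 l'"
    using assms(2) unfolding straddles_def by auto
  moreover note bounds = straddles_bounds[OF assms(1)]
  moreover have "b mod 3 = 1 \<or> b mod 3 = 2" using assms(1) unfolding straddles_def by auto
  ultimately consider
    "b mod 3 = 2" "b * 3 ^ l + 2 * 3 ^ l \<le> Suc b' * 3 ^ l' + repunit3 l'"
    | "b mod 3 = 1" "b' * 3 ^ l' + 2 * 3 ^ l \<le> Suc b * 3 ^ l + repunit3 l"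
    by linarith
  then show ?thesis
  proof cases
    case 1
    then have "((b * 3 ^ l) div 3 ^ l) mod 3 = 2" by simp
    then show ?thesis using G_E_digit_two 1(2) by blast
  next
    case 2
    have "repunit3 l < 3 ^ l" using repunit3_eq[of l] by linarith
    have "(repunit3 l + Suc b * 3 ^ l) div 3 ^ l = Suc b + repunit3 l div 3 ^ l"
      by (rule div_mult_self1) simp
    then have "(Suc b * 3 ^ l + repunit3 l) div 3 ^ l = Suc b"
      using \<open>repunit3 l < 3 ^ l\<close> by (simp only: add.commute) simp
    then have "((Suc b * 3 ^ l + repunit3 l) div 3 ^ l) mod 3 = Suc b mod 3" by (rule arg_cong)
    also have "\<dots> = 2" using 2(1) by presburger
    finally have "(2 * (Suc b * 3 ^ l + repunit3 l), 2 * (b' * 3 ^ l')) \<notin> G_E k"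
      using G_E_digit_two 2(2) by blast
    then show ?thesis using G_E_sym by blast
  qed
qed

lemma G_crossing_family:
  assumes "4 \<le> j0" "\<gamma> \<le> 3 ^ (j0 - 4)" "3 ^ (j0 + 5 * N) \<le> \<beta>"
    and "2 * (\<beta> + 3 ^ (j0 + 5 * N)) \<le> 3 ^ k"
  shows "\<exists>P Q. \<forall>t<N. P t < \<beta> \<and> \<beta> \<le> P t + 3 ^ (j0 + 5 * N) \<and>
    \<beta> + \<gamma> \<le> Q t \<and> Q t \<le> \<beta> + 3 ^ (j0 + 5 * N) \<and> (2 * P t, 2 * Q t) \<in> G_E k \<and>
    (\<forall>i<N. i \<noteq> t \<longrightarrow> (2 * P i, 2 * Q t) \<notin> G_E k \<or> (2 * P t, 2 * Q i) \<notin> G_E k)"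
proof -
  define W where "W = (3::nat) ^ (j0 + 5 * N)"
  have "\<exists>lb. t < N \<longrightarrow> fst lb \<in> {j0 + 5 * t, Suc (j0 + 5 * t)} \<and> straddles \<beta> \<gamma> (fst lb) (snd lb)" for t
  proof (cases "t < N")
    case True
    have "(3::nat) ^ (j0 - 4) \<le> 3 ^ (j0 + 5 * t - 4)" by (intro power_increasing) auto
    with assms(2) have "\<gamma> \<le> 3 ^ (j0 + 5 * t - 4)" by (rule le_trans)
    have "(3::nat) ^ (j0 + 5 * t + 2) \<le> W" unfolding W_def using True by (intro power_increasing) auto
    with assms(3) have "3 ^ (j0 + 5 * t + 2) \<le> \<beta>" unfolding W_def by (rule le_trans[rotated])
    with \<open>\<gamma> \<le> 3 ^ (j0 + 5 * t - 4)\<close> have "\<exists>l\<in>{j0 + 5 * t, Suc (j0 + 5 * t)}. \<exists>b. straddles \<beta> \<gamma> l b"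
      using assms(1) by (intro straddles_exists) auto
    then show ?thesis by force
  qed simp
  then obtain f where f: "\<forall>t<N. fst (f t) \<in> {j0 + 5 * t, Suc (j0 + 5 * t)} \<and> straddles \<beta> \<gamma> (fst (f t)) (snd (f t))"
    using choice[of "\<lambda>t lb. t < N \<longrightarrow> fst lb \<in> {j0 + 5 * t, Suc (j0 + 5 * t)} \<and> straddles \<beta> \<gamma> (fst lb) (snd lb)"]
    by blast
  define lev where "lev t = fst (f t)" for t
  define P where "P t = snd (f t) * 3 ^ lev t" for t
  define Q where "Q t = Suc (snd (f t)) * 3 ^ lev t + repunit3 (lev t)" for t
  have st: "straddles \<beta> \<gamma> (lev t) (snd (f t))" if "t < N" for t using f that unfolding lev_def by blast
  have W: "2 * 3 ^ lev t \<le> W" "3 ^ Suc (lev t) \<le> W" if "t < N" for t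
  proof -
    have "Suc (lev t) \<le> j0 + 5 * N" using f that unfolding lev_def by auto
    then show "3 ^ Suc (lev t) \<le> W" unfolding W_def by (intro power_increasing) auto
    then show "2 * 3 ^ lev t \<le> W" by simp
  qed
  have "P t < \<beta> \<and> \<beta> \<le> P t + W \<and> \<beta> + \<gamma> \<le> Q t \<and> Q t \<le> \<beta> + W \<and> (2 * P t, 2 * Q t) \<in> G_E k \<and>
    (\<forall>i<N. i \<noteq> t \<longrightarrow> (2 * P i, 2 * Q t) \<notin> G_E k \<or> (2 * P t, 2 * Q i) \<notin> G_E k)" if "t < N" for t
  proof (intro conjI allI impI)
    note b = straddles_bounds[OF st[OF that]]
    show "P t < \<beta>" "\<beta> + \<gamma> \<le> Q t" using b unfolding P_def Q_def by simp_all
    show "\<beta> \<le> P t + W" "Q t \<le> \<beta> + W" using b W[OF that] unfolding P_def Q_def by linarith+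
    have "2 * (\<beta> + 3 ^ Suc (lev t)) \<le> 2 * (\<beta> + W)" using W(2)[OF that] by simp
    also have "\<dots> \<le> 3 ^ k" using assms(4) unfolding W_def .
    finally have "2 * (\<beta> + 3 ^ Suc (lev t)) \<le> 3 ^ k" .
    then show "(2 * P t, 2 * Q t) \<in> G_E k"
      unfolding P_def Q_def by (rule straddles_edge[OF st[OF that]])
    fix i assume "i < N" "i \<noteq> t"
    moreover have "lev i = j0 + 5 * i \<or> lev i = Suc (j0 + 5 * i)" "lev t = j0 + 5 * t \<or> lev t = Suc (j0 + 5 * t)"
      using f \<open>i < N\<close> \<open>t < N\<close> unfolding lev_def by auto
    ultimately have "lev i + 4 \<le> lev t \<or> lev t + 4 \<le> lev i" by auto
    then show "(2 * P i, 2 * Q t) \<notin> G_E k \<or> (2 * P t, 2 * Q i) \<notin> G_E k"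
      using straddles_not_both_adjacent[OF st[OF \<open>i < N\<close>] st[OF that]]
        straddles_not_both_adjacent[OF st[OF that] st[OF \<open>i < N\<close>]]
      unfolding P_def Q_def by blast
  qed
  then show ?thesis unfolding W_def by blast
qed

lemma k_module_no_split_window:
  assumes "k_module c (G_V k) (G_E k) X" "c < N" "5 * N + 6 \<le> e"
    and "split_window (3 ^ k) X (3 ^ g) (3 ^ (g + e)) b1 b2"
  shows False
proof -
  define W where "W = (3::nat) ^ (g + 4 + 5 * N)"
  define \<beta> where "\<beta> = Suc (b1 div 2)"
  have "9 * W = 3 ^ (g + 5 * N + 6)" unfolding W_def by (simp add: power_add)
  also have "\<dots> \<le> 3 ^ (g + e)" using assms(3) by (intro power_increasing) auto
  finally have window: "b1 \<le> b2" "b2 < b1 + 3 ^ g" "9 * W \<le> b1" "b1 + 9 * W \<le> 3 ^ k"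
    "\<forall>y y'. b1 < y + 9 * W \<and> y \<le> b1 \<and> b2 < y' \<and> y' \<le> b1 + 9 * W \<longrightarrow> (y \<in> X \<longleftrightarrow> y' \<notin> X)"
    using split_window_mono[OF assms(4)] unfolding split_window_def by blast+
  have "1 \<le> W" unfolding W_def by simp
  have \<beta>: "b1 < 2 * \<beta>" "2 * \<beta> \<le> b1 + 2" using \<beta>_def by linarith+
  have "W \<le> \<beta>" using window(3) \<beta> by linarith
  have "2 * (\<beta> + W) \<le> b1 + 9 * W" using \<beta> \<open>1 \<le> W\<close> by arith
  also have "\<dots> \<le> 3 ^ k" by (rule window(4))
  finally have "2 * (\<beta> + W) \<le> 3 ^ k" .
  moreover have "(3::nat) ^ g \<le> 3 ^ (g + 4 - 4)" by simp
  ultimately obtain P Q where PQ: "\<forall>t<N. P t < \<beta> \<and> \<beta> \<le> P t + W \<and> \<beta> + 3 ^ g \<le> Q t \<and> Q t \<le> \<beta> + W \<and>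
      (2 * P t, 2 * Q t) \<in> G_E k \<and>
      (\<forall>i<N. i \<noteq> t \<longrightarrow> (2 * P i, 2 * Q t) \<notin> G_E k \<or> (2 * P t, 2 * Q i) \<notin> G_E k)"
    using G_crossing_family[OF le_add2 _ \<open>W \<le> \<beta>\<close>[unfolded W_def]] unfolding W_def[symmetric]
    by blast
  have split: "2 * P i \<in> X \<longleftrightarrow> 2 * Q t \<notin> X" if "i < N" "t < N" for i t
  proof -
    have "P i < \<beta>" "\<beta> \<le> P i + W" "\<beta> + 3 ^ g \<le> Q t" "Q t \<le> \<beta> + W" using PQ that by auto
    then have "b1 < 2 * P i + 9 * W" "2 * P i \<le> b1" "b2 < 2 * Q t" "2 * Q t \<le> b1 + 9 * W"
      using \<beta> window(2) \<open>1 \<le> W\<close> by linarith+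
    then show ?thesis using window(5) by blast
  qed
  have "card {..<N} \<le> c"
    by (rule k_module_split_crossing_card_le[OF assms(1) sym_G_E G_E_subset finite_lessThan,
          where x = "\<lambda>t. 2 * P t" and y = "\<lambda>t. 2 * Q t"]) (use PQ split in auto)
  then show False using assms(2) by simp
qed

lemma mult_less_power3: "a * 3 ^ m < (3::nat) ^ (m + a)"
proof -
  have "a < 2 ^ a" by (rule less_exp)
  also have "(2::nat) ^ a \<le> 3 ^ a" by (rule power_mono) simp_all
  finally have "a * 3 ^ m < 3 ^ a * 3 ^ m" by simp
  then show ?thesis by (simp add: power_add)
qed

theorem theorem17:
  shows "\<forall>r::nat. \<exists>k\<ge>1. r < clique_width (G_V k) (G_E k)"
proof
  fix r :: nat
  define N where "N = Suc r"
  define C where "C = 3 * N"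
  define e where "e = 5 * N + 6"
  define k where "k = Suc (e * Suc (C * C) + (3 * C + 2))"
  have "r < clique_width (G_V k) (G_E k)"
  proof (rule ccontr)
    define c where "c = clique_width (G_V k) (G_E k)"
    assume "\<not> r < clique_width (G_V k) (G_E k)"
    then have "c < N" unfolding c_def N_def by simp
    have "finite (G_V k)" "G_V k \<noteq> {}" unfolding G_V_def by auto
    then obtain l where "cw_constructible c (G_V k) (G_E k) l"
      using clique_width_attained[OF _ _ G_E_subset sym_G_E irrefl_G_E] unfolding c_def by blast
    define m where "m = (3::nat) ^ (k - 1)"
    have "3 ^ k = 3 * m" unfolding m_def k_def by simp
    then have "1 \<le> m" "m \<le> card (G_V k)" unfolding m_def card_G_V by simp_all
    then obtain X where X: "X \<subseteq> G_V k" "m \<le> card X" "card X < 2 * m" "k_module c (G_V k) (G_E k) X"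
      using cw_constructible_balanced_module[OF \<open>cw_constructible c (G_V k) (G_E k) l\<close>] by blast
    have "card (cuts (3 ^ k) X) \<le> C"
      using card_cuts_lt_if_k_module[OF X(4)] \<open>c < N\<close> unfolding C_def by arith
    have "k - 1 = e * Suc (C * C) + (3 * C + 2)" unfolding k_def by simp
    then have bound: "(3 * C + 2) * 3 ^ (e * Suc (C * C)) < m"
      unfolding m_def by (simp only: mult_less_power3)
    have "X \<subseteq> {..<3 ^ k}" using X(1) unfolding G_V_def by auto
    have "card ({..<3 ^ k} - X) = 3 ^ k - card X"
      using \<open>X \<subseteq> {..<3 ^ k}\<close> by (simp add: card_Diff_subset finite_subset)
    with bound X(3) \<open>3 ^ k = 3 * m\<close>
    have "(3 * C + 2) * 3 ^ (e * Suc (C * C)) < card ({..<3 ^ k} - X)" by linarith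
    moreover have "(3 * C + 2) * 3 ^ (e * Suc (C * C)) < card X" using bound X(2) by linarith
    moreover have "2 \<le> e" unfolding e_def by simp
    ultimately obtain t b1 b2 where window: "split_window (3 ^ k) X (3 ^ (e * t)) (3 ^ (e * t + e)) b1 b2"
      using split_window_exists[OF \<open>X \<subseteq> {..<3 ^ k}\<close> \<open>card (cuts (3 ^ k) X) \<le> C\<close>] by blast
    have "5 * N + 6 \<le> e" unfolding e_def ..
    from k_module_no_split_window[OF X(4) \<open>c < N\<close> this window] show False .
  qed
  moreover have "1 \<le> k" unfolding k_def by simp
  ultimately show "\<exists>k\<ge>1. r < clique_width (G_V k) (G_E k)" by blast
qed

end
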